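(* Let $f:\mathbb{X}\to\mathbb{R}$ be a finite measurable function. If $\limsup_n \frac1n\,|f\circ T^{-n}+f\circ T^{n}|<+\infty$ $\mu$-a.e. on a set of positive measure, then $\lim_n \frac1n f\circ T^n=0$ $\mu$-a.e. on $\mathbb{X}$.
   Context: Standing assumptions: $(\mathbb{X},\mathcal{X},\mu,T)$ is a probability space with $T$ an invertible, bi-measurable, measure-preserving, ergodic transformation. *)

theory Defs
  imports "HOL-Probability.Probability"
begin

definition measure_preserving :: "'a measure \<Rightarrow> ('a \<Rightarrow> 'a) \<Rightarrow> bool" where
  "measure_preserving M T \<longleftrightarrow> T \<in> measurable M M \<and>
     (\<forall>A\<in>sets M. emeasure M (T -` A \<inter> space M) = emeasure M A)"

definition invertible_bimeasurable :: "'a measure \<Rightarrow> ('a \<Rightarrow> 'a) \<Rightarrow> bool" where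
  "invertible_bimeasurable M T \<longleftrightarrow> bij_betw T (space M) (space M) \<and>
     T \<in> measurable M M \<and> inv_into (space M) T \<in> measurable M M"

definition ergodic :: "'a measure \<Rightarrow> ('a \<Rightarrow> 'a) \<Rightarrow> bool" where
  "ergodic M T \<longleftrightarrow> (\<forall>A\<in>sets M. T -` A \<inter> space M = A \<longrightarrow>
     measure M A = 0 \<or> measure M A = 1)"

definition standing_system :: "'a measure \<Rightarrow> ('a \<Rightarrow> 'a) \<Rightarrow> bool" where
  "standing_system M T \<longleftrightarrow> prob_space M \<and> invertible_bimeasurable M T \<and>
     measure_preserving M T \<and> ergodic M T"

end

theory Submission
  imports Defs
begin

text \<open>Ergodicity together with the maximal ergodic inequality shows that along almost every orbit a
  set \<open>E\<close> of positive measure is visited with positive frequency, so for every \<open>q\<close> and all large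
  \<open>k\<close> there is a visit time \<open>v < k\<close> with \<open>q (k - v) \<le> k\<close>.

  The hypothesis provides such a set \<open>E\<close> on which \<open>\<bar>f (T\<^sup>-\<^sup>n y) + f (T\<^sup>n y)\<bar> \<le> j n\<close> for all
  \<open>n \<ge> 1\<close>. Taking \<open>y = T\<^sup>v x\<close> and \<open>n = k - v\<close> with \<open>v \<ge> k/2\<close> bounds \<open>\<bar>f (T\<^sup>k x)\<bar>\<close> by
  \<open>\<bar>f (T\<^sup>v\<^sup>-\<^sup>n x)\<bar> + j n\<close>, and strong induction on \<open>k\<close> yields \<open>\<bar>f (T\<^sup>k x)\<bar> \<le> c (k + 1)\<close> almost
  everywhere. Hence some set \<open>G\<close> of positive measure carries a uniform such bound, and a visit to
  \<open>G\<close> at a time \<open>v\<close> with \<open>q (k - v) \<le> k\<close> gives \<open>\<bar>f (T\<^sup>k x)\<bar> / k \<le> c / q + c / k\<close>.\<close>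

lemma (in prob_space) prob_pos_member_if_AE_covered:
  fixes E :: "nat \<Rightarrow> 'a set"
  assumes "\<And>j. E j \<in> events" and "A \<in> events" and "0 < prob A"
    and cover: "AE x in M. x \<in> A \<longrightarrow> (\<exists>j. x \<in> E j)"
  shows "\<exists>j. 0 < prob (E j)"
proof (rule ccontr)
  assume "\<nexists>j. 0 < prob (E j)"
  then have "prob (E j) = 0" for j by (meson measure_nonneg not_less order.antisym)
  then have "E j \<in> null_sets M" for j using assms(1) by (simp add: emeasure_eq_measure null_sets_def)
  then have "AE x in M. x \<notin> (\<Union>j. E j)" by (intro AE_not_in) auto
  with cover have "AE x in M. x \<notin> A" by eventually_elim auto
  then have "A \<in> null_sets M" using assms(2) by (simp add: AE_iff_null_sets)
  then show False using \<open>0 < prob A\<close> by (simp add: emeasure_eq_measure null_sets_def)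
qed

lemma real_lt_if_div_le_half_quotient:
  fixes k q :: nat and a :: real
  assumes "1 \<le> q" and "real (k div q) \<le> k / (2 * q) + a"
  shows "real k < 2 * q + 2 * q * a"
proof -
  have "q * (k div q) + k mod q = k" by (rule mult_div_mod_eq)
  moreover have "k mod q < q" using assms(1) by simp
  ultimately have "k < q * (k div q) + q" by linarith
  then have "real k < real (q * (k div q) + q)" by (simp only: of_nat_less_iff)
  then have "real k < q * real (k div q) + q" by simp
  also have "\<dots> \<le> q * (k / (2 * q) + a) + q"
    using assms(2) by (intro add_right_mono mult_left_mono) simp_all
  also have "\<dots> = k / 2 + q * a + q"
    using assms(1) by (simp add: field_simps)
  finally show ?thesis by linarith
qed

locale mp_system = prob_space M for M :: "'a measure" +
  fixes T :: "'a \<Rightarrow> 'a"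
  assumes measure_preserving: "measure_preserving M T"
begin

lemma T_measurable [measurable]: "T \<in> measurable M M"
  using measure_preserving unfolding measure_preserving_def by blast

lemma funpow_T_measurable [measurable]: "T ^^ n \<in> measurable M M"
  by (rule measurable_compose_n[OF T_measurable])

lemma comp_funpow_T_measurable [measurable]:
  "g \<in> borel_measurable M \<Longrightarrow> (\<lambda>x. g ((T ^^ n) x)) \<in> borel_measurable M"
  by (rule measurable_compose[OF funpow_T_measurable])

lemma funpow_T_space: "x \<in> space M \<Longrightarrow> (T ^^ n) x \<in> space M"
  using measurable_space[OF funpow_T_measurable] .

lemma distr_T: "distr M M T = M"
  using measure_preserving unfolding measure_preserving_def
  by (intro measure_eqI) (simp_all add: emeasure_distr)

lemma integral_comp_T:
  fixes g :: "'a \<Rightarrow> real"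
  assumes "g \<in> borel_measurable M"
  shows "(\<integral>x. g (T x) \<partial>M) = (\<integral>x. g x \<partial>M)"
  using integral_distr[OF T_measurable assms] by (simp add: distr_T)

definition birkhoff_sum :: "('a \<Rightarrow> real) \<Rightarrow> nat \<Rightarrow> 'a \<Rightarrow> real" where
  "birkhoff_sum g n x = (\<Sum>k<n. g ((T ^^ k) x))"

lemma birkhoff_sum_0 [simp]: "birkhoff_sum g 0 x = 0"
  by (simp add: birkhoff_sum_def)

lemma birkhoff_sum_Suc: "birkhoff_sum g (Suc n) x = g x + birkhoff_sum g n (T x)"
  unfolding birkhoff_sum_def by (simp only: sum.lessThan_Suc_shift funpow_Suc_right funpow_0 comp_def)

lemma birkhoff_sum_add: "birkhoff_sum g (m + d) x = birkhoff_sum g m x + (\<Sum>k<d. g ((T ^^ (m + k)) x))"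
  by (induction d) (simp_all add: birkhoff_sum_def)

lemma birkhoff_sum_diff: "birkhoff_sum (\<lambda>y. g y - h y) n x = birkhoff_sum g n x - birkhoff_sum h n x"
  by (simp add: birkhoff_sum_def sum_subtractf)

lemma birkhoff_sum_const: "birkhoff_sum (\<lambda>_. c) n x = c * n"
  by (simp add: birkhoff_sum_def)

lemma birkhoff_sum_measurable [measurable]:
  "g \<in> borel_measurable M \<Longrightarrow> birkhoff_sum g n \<in> borel_measurable M"
  unfolding birkhoff_sum_def by measurable

lemma abs_birkhoff_sum_le:
  assumes "\<And>x. x \<in> space M \<Longrightarrow> \<bar>g x\<bar> \<le> B" and "x \<in> space M"
  shows "\<bar>birkhoff_sum g n x\<bar> \<le> n * B"
proof -
  have "\<bar>birkhoff_sum g n x\<bar> \<le> (\<Sum>k<n. \<bar>g ((T ^^ k) x)\<bar>)"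
    unfolding birkhoff_sum_def by (rule sum_abs)
  also have "\<dots> \<le> (\<Sum>k<n. B)"
    by (intro sum_mono assms funpow_T_space)
  finally show ?thesis by simp
qed

definition max_birkhoff_sum :: "('a \<Rightarrow> real) \<Rightarrow> nat \<Rightarrow> 'a \<Rightarrow> real" where
  "max_birkhoff_sum g N x = Max ((\<lambda>n. birkhoff_sum g n x) ` {..N})"

lemma birkhoff_sum_le_max: "n \<le> N \<Longrightarrow> birkhoff_sum g n x \<le> max_birkhoff_sum g N x"
  unfolding max_birkhoff_sum_def by (intro Max_ge) auto

lemma max_birkhoff_sum_nonneg: "0 \<le> max_birkhoff_sum g N x"
  using birkhoff_sum_le_max[of 0 N g x] by simp

lemma max_birkhoff_sum_attained:
  obtains n where "n \<le> N" "max_birkhoff_sum g N x = birkhoff_sum g n x"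
proof -
  have "max_birkhoff_sum g N x \<in> (\<lambda>n. birkhoff_sum g n x) ` {..N}"
    unfolding max_birkhoff_sum_def by (intro Max_in) auto
  then show ?thesis using that by auto
qed

lemma max_birkhoff_sum_measurable [measurable]:
  "g \<in> borel_measurable M \<Longrightarrow> max_birkhoff_sum g N \<in> borel_measurable M"
  unfolding max_birkhoff_sum_def by measurable

lemma abs_max_birkhoff_sum_le:
  assumes "\<And>x. x \<in> space M \<Longrightarrow> \<bar>g x\<bar> \<le> B" and "x \<in> space M"
  shows "\<bar>max_birkhoff_sum g N x\<bar> \<le> N * \<bar>B\<bar>"
proof -
  obtain n where n: "n \<le> N" "max_birkhoff_sum g N x = birkhoff_sum g n x"
    by (rule max_birkhoff_sum_attained)
  have "\<bar>birkhoff_sum g n x\<bar> \<le> n * B" by (rule abs_birkhoff_sum_le[OF assms])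
  also have "\<dots> \<le> n * \<bar>B\<bar>" by (simp add: mult_left_mono)
  also have "\<dots> \<le> N * \<bar>B\<bar>" using n(1) by (simp add: mult_right_mono)
  finally show ?thesis using n(2) by simp
qed

text \<open>The pointwise inequality behind the maximal ergodic theorem: where the maximum is positive it
  is attained at some \<open>n \<ge> 1\<close>, and peeling off the first term of that sum leaves a sum at \<open>T x\<close>.\<close>
lemma max_birkhoff_sum_diff_le:
  "max_birkhoff_sum g N x - max_birkhoff_sum g N (T x) \<le> (if 0 < max_birkhoff_sum g N x then g x else 0)"
proof (cases "0 < max_birkhoff_sum g N x")
  case True
  obtain n where n: "n \<le> N" "max_birkhoff_sum g N x = birkhoff_sum g n x"
    by (rule max_birkhoff_sum_attained)
  with True obtain n' where n': "n = Suc n'" by (cases n) auto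
  have "birkhoff_sum g n' (T x) \<le> max_birkhoff_sum g N (T x)"
    using n n' by (intro birkhoff_sum_le_max) auto
  then show ?thesis using True n n' by (simp add: birkhoff_sum_Suc)
next
  case False
  then show ?thesis using max_birkhoff_sum_nonneg[of g N "T x"] by simp
qed

lemma maximal_ergodic_inequality:
  fixes g :: "'a \<Rightarrow> real"
  assumes [measurable]: "g \<in> borel_measurable M" and bound: "\<And>x. x \<in> space M \<Longrightarrow> \<bar>g x\<bar> \<le> B"
  shows "0 \<le> (\<integral>x. (if 0 < max_birkhoff_sum g N x then g x else 0) \<partial>M)"
proof -
  let ?m = "max_birkhoff_sum g N"
  have int_m: "integrable M ?m"
    by (rule integrable_const_bound[where B="N * \<bar>B\<bar>"])
       (auto intro!: AE_I2 abs_max_birkhoff_sum_le[OF bound])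
  have int_mT: "integrable M (\<lambda>x. ?m (T x))"
    by (rule integrable_const_bound[where B="N * \<bar>B\<bar>"])
       (auto intro!: AE_I2 abs_max_birkhoff_sum_le[OF bound] measurable_space[OF T_measurable])
  have int_g: "integrable M (\<lambda>x. if 0 < ?m x then g x else 0)"
    by (rule integrable_const_bound[where B="\<bar>B\<bar>"]) (auto intro!: AE_I2 dest: bound)
  have "0 = (\<integral>x. ?m x \<partial>M) - (\<integral>x. ?m (T x) \<partial>M)"
    by (simp add: integral_comp_T)
  also have "\<dots> = (\<integral>x. ?m x - ?m (T x) \<partial>M)"
    using int_m int_mT by simp
  also have "\<dots> \<le> (\<integral>x. (if 0 < ?m x then g x else 0) \<partial>M)"
    by (intro integral_mono int_m int_mT int_g Bochner_Integration.integrable_diff max_birkhoff_sum_diff_le)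
  finally show ?thesis .
qed

lemma integral_nonneg_if_AE_birkhoff_sum_pos:
  fixes g :: "'a \<Rightarrow> real"
  assumes [measurable]: "g \<in> borel_measurable M" and bound: "\<And>x. x \<in> space M \<Longrightarrow> \<bar>g x\<bar> \<le> B"
    and pos: "AE x in M. \<exists>n. 0 < birkhoff_sum g n x"
  shows "0 \<le> (\<integral>x. g x \<partial>M)"
proof (rule LIMSEQ_le_const)
  show "(\<lambda>N. \<integral>x. (if 0 < max_birkhoff_sum g N x then g x else 0) \<partial>M) \<longlonglongrightarrow> (\<integral>x. g x \<partial>M)"
  proof (rule integral_dominated_convergence[where w="\<lambda>_. \<bar>B\<bar>"])
    show "AE x in M. (\<lambda>N. if 0 < max_birkhoff_sum g N x then g x else 0) \<longlonglongrightarrow> g x"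
      using pos
    proof eventually_elim
      case (elim x)
      then obtain n where "0 < birkhoff_sum g n x" by blast
      then have "\<forall>N\<ge>n. 0 < max_birkhoff_sum g N x"
        using birkhoff_sum_le_max by (blast intro: less_le_trans)
      then show ?case
        by (intro tendsto_eventually) (auto simp: eventually_sequentially)
    qed
    show "AE x in M. norm (if 0 < max_birkhoff_sum g N x then g x else 0) \<le> \<bar>B\<bar>" for N
      by (intro AE_I2) (auto dest: bound)
  qed auto
  show "\<exists>N0. \<forall>N\<ge>N0. 0 \<le> (\<integral>x. (if 0 < max_birkhoff_sum g N x then g x else 0) \<partial>M)"
    using maximal_ergodic_inequality[OF assms(1,2)] by blast
qed

end

locale ergodic_system = mp_system +
  assumes ergodic: "ergodic M T"
begin

lemma invariant_set_prob_0_or_1: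
  assumes "G \<in> sets M" and "\<And>x. x \<in> space M \<Longrightarrow> T x \<in> G \<longleftrightarrow> x \<in> G"
  shows "prob G = 0 \<or> prob G = 1"
proof -
  have "T -` G \<inter> space M = G"
    using assms sets.sets_into_space[OF assms(1)] by auto
  then show ?thesis using ergodic assms(1) unfolding ergodic_def by blast
qed

text \<open>Having bounded Birkhoff sums is a \<open>T\<close>-invariant property, so by ergodicity it holds almost
  everywhere or almost nowhere; the latter contradicts the maximal ergodic inequality.\<close>
lemma birkhoff_sum_bounded_above_AE:
  fixes g :: "'a \<Rightarrow> real"
  assumes [measurable]: "g \<in> borel_measurable M" and bound: "\<And>x. x \<in> space M \<Longrightarrow> \<bar>g x\<bar> \<le> B"
    and neg: "(\<integral>x. g x \<partial>M) < 0"
  shows "AE x in M. \<exists>C. \<forall>n. birkhoff_sum g n x \<le> C"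
proof -
  define G where "G = {x \<in> space M. \<exists>C::nat. \<forall>n. birkhoff_sum g n x \<le> C}"
  have G_sets: "G \<in> sets M" unfolding G_def by measurable
  have bounded_iff: "(\<exists>C::nat. \<forall>n. birkhoff_sum g n (T x) \<le> C) \<longleftrightarrow> (\<exists>C::nat. \<forall>n. birkhoff_sum g n x \<le> C)"
    for x
  proof
    assume "\<exists>C::nat. \<forall>n. birkhoff_sum g n (T x) \<le> C"
    then obtain C :: nat where C: "\<And>n. birkhoff_sum g n (T x) \<le> C" by blast
    have "birkhoff_sum g n x \<le> C + nat \<lceil>\<bar>g x\<bar>\<rceil>" for n
    proof (cases n)
      case (Suc n')
      then show ?thesis using C[of n'] by (simp add: birkhoff_sum_Suc) linarith
    qed simp
    then show "\<exists>C::nat. \<forall>n. birkhoff_sum g n x \<le> C" by (intro exI[of _ "C + nat \<lceil>\<bar>g x\<bar>\<rceil>"]) simp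
  next
    assume "\<exists>C::nat. \<forall>n. birkhoff_sum g n x \<le> C"
    then obtain C :: nat where C: "\<And>n. birkhoff_sum g n x \<le> C" by blast
    have "birkhoff_sum g n (T x) \<le> C + nat \<lceil>\<bar>g x\<bar>\<rceil>" for n
      using C[of "Suc n"] by (simp add: birkhoff_sum_Suc) linarith
    then show "\<exists>C::nat. \<forall>n. birkhoff_sum g n (T x) \<le> C" by (intro exI[of _ "C + nat \<lceil>\<bar>g x\<bar>\<rceil>"]) simp
  qed
  have "prob G \<noteq> 0"
  proof
    assume "prob G = 0"
    then have "AE x in M. x \<notin> G"
      using G_sets by (intro AE_not_in) (simp add: emeasure_eq_measure null_sets_def)
    then have "AE x in M. \<exists>n. 0 < birkhoff_sum g n x"
      using AE_space
    proof eventually_elim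
      case (elim x)
      then have "\<not> (\<forall>n. birkhoff_sum g n x \<le> real (0::nat))" unfolding G_def by blast
      then show ?case by (auto simp: not_le)
    qed
    then show False
      using integral_nonneg_if_AE_birkhoff_sum_pos[OF assms(1) bound] neg by linarith
  qed
  moreover have "prob G = 0 \<or> prob G = 1"
    using G_sets by (rule invariant_set_prob_0_or_1) (auto simp: G_def bounded_iff measurable_space[OF T_measurable])
  ultimately have "AE x in M. x \<in> G" by (auto intro: AE_prob_1)
  then show ?thesis by eventually_elim (auto simp: G_def)
qed

lemma birkhoff_sum_indicator_deviation_AE:
  fixes \<epsilon> :: real
  assumes [measurable]: "E \<in> sets M" and "0 < \<epsilon>"
  shows "AE x in M. \<exists>C. \<forall>n. \<bar>birkhoff_sum (indicator E) n x - prob E * n\<bar> \<le> \<epsilon> * n + C"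
proof -
  have P: "0 \<le> prob E" by simp
  have "AE x in M. \<exists>C. \<forall>n. birkhoff_sum (\<lambda>y. indicator E y - (prob E + \<epsilon>)) n x \<le> C"
  proof (rule birkhoff_sum_bounded_above_AE[where B="1 + prob E + \<epsilon>"])
    show "(\<integral>x. indicator E x - (prob E + \<epsilon>) \<partial>M) < 0"
      using \<open>0 < \<epsilon>\<close> by (simp add: prob_space integrable_indicator_iff less_top[symmetric])
  qed (use \<open>0 < \<epsilon>\<close> P in \<open>auto simp: indicator_def abs_le_iff\<close>)
  moreover have "AE x in M. \<exists>C. \<forall>n. birkhoff_sum (\<lambda>y. (prob E - \<epsilon>) - indicator E y) n x \<le> C"
  proof (rule birkhoff_sum_bounded_above_AE[where B="1 + prob E + \<epsilon>"])
    show "(\<integral>x. (prob E - \<epsilon>) - indicator E x \<partial>M) < 0"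
      using \<open>0 < \<epsilon>\<close> by (simp add: prob_space integrable_indicator_iff less_top[symmetric])
  qed (use \<open>0 < \<epsilon>\<close> P in \<open>auto simp: indicator_def abs_le_iff\<close>)
  ultimately show ?thesis
  proof eventually_elim
    case (elim x)
    then obtain C1 C2 where
      C1: "\<And>n. birkhoff_sum (\<lambda>y. indicator E y - (prob E + \<epsilon>)) n x \<le> C1" and
      C2: "\<And>n. birkhoff_sum (\<lambda>y. (prob E - \<epsilon>) - indicator E y) n x \<le> C2"
      by blast
    have "\<bar>birkhoff_sum (indicator E) n x - prob E * n\<bar> \<le> \<epsilon> * n + max C1 C2" for n
      using C1[of n] C2[of n]
      unfolding birkhoff_sum_diff birkhoff_sum_const abs_le_iff ring_distribs by linarith
    then show ?case by blast
  qed
qed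

lemma birkhoff_sum_indicator_eq_if_no_visit:
  assumes "d \<le> k" and "\<And>v. k - d \<le> v \<Longrightarrow> v < k \<Longrightarrow> (T ^^ v) x \<notin> E"
  shows "birkhoff_sum (indicator E) k x = birkhoff_sum (indicator E) (k - d) x"
proof -
  have "(\<Sum>i<d. indicator E ((T ^^ (k - d + i)) x)) = (0::real)"
    using assms by (intro sum.neutral ballI) auto
  then show ?thesis
    using birkhoff_sum_add[of "indicator E" "k - d" d x] assms(1) by simp
qed

text \<open>If \<open>E\<close> were not visited at the last \<open>d = k div q\<close> times before \<open>k\<close>, the visit count would
  not grow over \<open>d\<close> steps, while by the deviation bound with \<open>\<epsilon> = prob E / (4 q)\<close> it grows by
  roughly \<open>prob E\<close> per step; this is impossible once \<open>k\<close> is large.\<close>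
lemma recent_visit_AE:
  assumes [measurable]: "E \<in> sets M" and pos: "0 < prob E" and q: "1 \<le> q"
  shows "AE x in M. \<exists>k0. \<forall>k\<ge>k0. \<exists>v<k. q * (k - v) \<le> k \<and> (T ^^ v) x \<in> E"
proof -
  define P where "P = prob E"
  define \<epsilon> where "\<epsilon> = P / (4 * q)"
  have \<epsilon>_pos: "0 < \<epsilon>" using pos q by (simp add: \<epsilon>_def P_def)
  have P_eq: "P = 4 * q * \<epsilon>" using q by (simp add: \<epsilon>_def)
  have "AE x in M. \<exists>C. \<forall>n. \<bar>birkhoff_sum (indicator E) n x - P * n\<bar> \<le> \<epsilon> * n + C"
    unfolding P_def by (rule birkhoff_sum_indicator_deviation_AE[OF assms(1) \<epsilon>_pos])
  then show ?thesis
  proof eventually_elim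
    case (elim x)
    then obtain C where C: "\<And>n. \<bar>birkhoff_sum (indicator E) n x - P * n\<bar> \<le> \<epsilon> * n + C" by blast
    define k0 where "k0 = nat \<lceil>2 * q + 2 * q * (2 * C / P)\<rceil>"
    show ?case
    proof (rule exI[of _ k0], intro allI impI)
      fix k assume large: "k0 \<le> k"
      define d where "d = k div q"
      show "\<exists>v<k. q * (k - v) \<le> k \<and> (T ^^ v) x \<in> E"
      proof (rule ccontr)
        assume no_visit: "\<not> ?thesis"
        have dk: "d \<le> k" "q * d \<le> k" unfolding d_def by (simp_all add: div_le_dividend)
        have "birkhoff_sum (indicator E) k x = birkhoff_sum (indicator E) (k - d) x"
        proof (rule birkhoff_sum_indicator_eq_if_no_visit[OF dk(1)])
          fix v assume "k - d \<le> v" "v < k"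
          moreover have "q * (k - v) \<le> k"
            by (rule order.trans[OF mult_le_mono2 dk(2)]) (use \<open>k - d \<le> v\<close> in linarith)
          ultimately show "(T ^^ v) x \<notin> E" using no_visit by blast
        qed
        then have "P * d \<le> \<epsilon> * (2 * real k - d) + 2 * C"
          using C[of k] C[of "k - d"] dk unfolding abs_le_iff by (simp add: algebra_simps)
        moreover have "\<epsilon> * (2 * real k - d) \<le> P * k / (2 * q)"
          using \<epsilon>_pos q unfolding P_eq by (simp add: field_simps)
        ultimately have "real d \<le> k / (2 * q) + 2 * C / P"
          using pos unfolding P_def by (simp add: field_simps)
        then have "real k < 2 * q + 2 * q * (2 * C / P)"
          unfolding d_def by (rule real_lt_if_div_le_half_quotient[OF q])
        then show False using large unfolding k0_def by linarith
      qed
    qed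
  qed
qed

lemma tendsto_zero_AE_if_bounded_on_positive_set:
  fixes f :: "'a \<Rightarrow> real" and c :: real
  assumes "G \<in> sets M" and "0 < prob G"
    and bound: "\<And>x k. x \<in> G \<Longrightarrow> \<bar>f ((T ^^ k) x)\<bar> \<le> c * (real k + 1)"
  shows "AE x in M. (\<lambda>k. f ((T ^^ k) x) / k) \<longlonglongrightarrow> 0"
proof -
  have "AE x in M. \<forall>q::nat. \<exists>k0. \<forall>k\<ge>k0. \<exists>v<k. Suc q * (k - v) \<le> k \<and> (T ^^ v) x \<in> G"
    unfolding AE_all_countable by (intro allI recent_visit_AE assms) simp
  then show ?thesis
  proof eventually_elim
    case (elim x)
    show ?case
    proof (rule LIMSEQ_I)
      fix r :: real assume "0 < r"
      obtain N :: nat where N: "2 * \<bar>c\<bar> / r < N"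
        using reals_Archimedean2 by blast
      obtain k0 where k0: "\<And>k. k0 \<le> k \<Longrightarrow> \<exists>v<k. Suc N * (k - v) \<le> k \<and> (T ^^ v) x \<in> G"
        using elim by blast
      have small: "\<bar>c\<bar> / n < r / 2" if "N \<le> n" "0 < n" for n :: nat
      proof -
        have "2 * \<bar>c\<bar> / r < n" using N that(1) by linarith
        then show ?thesis using \<open>0 < r\<close> that(2) by (simp add: field_simps)
      qed
      show "\<exists>k0. \<forall>k\<ge>k0. norm (f ((T ^^ k) x) / real k - 0) < r"
      proof (rule exI[of _ "max k0 (Suc N)"], intro allI impI)
        fix k assume k: "max k0 (Suc N) \<le> k"
        then obtain v where v: "v < k" "Suc N * (k - v) \<le> k" "(T ^^ v) x \<in> G"
          using k0 by fastforce
        have "real (Suc N) * real (k - v) \<le> real k"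
          using v(2) by (simp only: of_nat_mult[symmetric] of_nat_le_iff)
        then have "real (k - v) \<le> k / Suc N"
          by (simp add: field_simps)
        have "\<bar>f ((T ^^ k) x)\<bar> = \<bar>f ((T ^^ (k - v)) ((T ^^ v) x))\<bar>"
          using funpow_add[of "k - v" v T] v(1) by simp
        also have "\<dots> \<le> c * (real (k - v) + 1)" by (rule bound[OF v(3)])
        also have "\<dots> \<le> \<bar>c\<bar> * (k / Suc N + 1)"
          using \<open>real (k - v) \<le> k / Suc N\<close> by (intro mult_mono) auto
        finally have "\<bar>f ((T ^^ k) x)\<bar> / k \<le> \<bar>c\<bar> * (k / Suc N + 1) / k"
          by (simp add: divide_right_mono)
        also have "\<dots> = \<bar>c\<bar> / Suc N + \<bar>c\<bar> / k"
          using k by (simp add: field_simps)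
        also have "\<dots> < r"
          using small[of "Suc N"] small[of k] k by linarith
        finally show "norm (f ((T ^^ k) x) / real k - 0) < r" by simp
      qed
    qed
  qed
qed

lemma tendsto_zero_AE_if_linear_growth:
  fixes f :: "'a \<Rightarrow> real"
  assumes [measurable]: "f \<in> borel_measurable M"
    and growth: "AE x in M. \<exists>c. \<forall>k. \<bar>f ((T ^^ k) x)\<bar> \<le> c * (real k + 1)"
  shows "AE x in M. (\<lambda>k. f ((T ^^ k) x) / k) \<longlonglongrightarrow> 0"
proof -
  define G where "G i = {x \<in> space M. \<forall>k. \<bar>f ((T ^^ k) x)\<bar> \<le> real i * (real k + 1)}" for i :: nat
  have G_sets: "G i \<in> sets M" for i unfolding G_def by measurable
  have "AE x in M. x \<in> space M \<longrightarrow> (\<exists>i. x \<in> G i)"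
    using growth AE_space
  proof eventually_elim
    case (elim x)
    then obtain c where c: "\<And>k. \<bar>f ((T ^^ k) x)\<bar> \<le> c * (real k + 1)" by blast
    have "c * (real k + 1) \<le> real (nat \<lceil>c\<rceil>) * (real k + 1)" for k
      by (intro mult_right_mono) linarith+
    then show ?case using c elim unfolding G_def by (blast intro: order.trans)
  qed
  then obtain i where "0 < prob (G i)"
    using prob_pos_member_if_AE_covered[of G, OF G_sets sets.top] by (auto simp: prob_space)
  then show ?thesis
    by (rule tendsto_zero_AE_if_bounded_on_positive_set[OF G_sets]) (auto simp: G_def)
qed

end

lemma funpow_inv_into_funpow:
  assumes "inj_on T S" and "T ` S \<subseteq> S" and "x \<in> S" and "n \<le> v"
  shows "(inv_into S T ^^ n) ((T ^^ v) x) = (T ^^ (v - n)) x"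
  using \<open>n \<le> v\<close>
proof (induction n)
  case (Suc n)
  have "(T ^^ k) x \<in> S" for k
    by (induction k) (use assms(2,3) in auto)
  moreover have "v - n = Suc (v - Suc n)" using Suc.prems by simp
  ultimately show ?case
    using Suc assms(1) by (simp add: inv_into_f_f)
qed simp

locale invertible_ergodic_system = ergodic_system +
  assumes invertible: "invertible_bimeasurable M T"
begin

abbreviation T_inv :: "'a \<Rightarrow> 'a" where
  "T_inv \<equiv> inv_into (space M) T"

lemma T_inv_measurable [measurable]: "T_inv \<in> measurable M M"
  using invertible unfolding invertible_bimeasurable_def by blast

lemma funpow_T_inv_funpow_T:
  "x \<in> space M \<Longrightarrow> n \<le> v \<Longrightarrow> (T_inv ^^ n) ((T ^^ v) x) = (T ^^ (v - n)) x"
  using invertible measurable_space[OF T_measurable]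
  by (intro funpow_inv_into_funpow) (auto simp: invertible_bimeasurable_def bij_betw_def)

text \<open>Strong induction on \<open>k\<close>: at a recent visit time \<open>v\<close> to \<open>E\<close>, the bound on \<open>E\<close> with
  \<open>n = k - v\<close> controls \<open>f\<close> at time \<open>v + n = k\<close> by its value at the earlier time \<open>v - n\<close>.\<close>
lemma abs_funpow_le_linear_if_recent_visits:
  fixes f :: "'a \<Rightarrow> real" and j :: real
  assumes "x \<in> space M" and "0 \<le> j"
    and bound: "\<And>y n. y \<in> E \<Longrightarrow> 1 \<le> n \<Longrightarrow> \<bar>f ((T_inv ^^ n) y) + f ((T ^^ n) y)\<bar> \<le> j * n"
    and visits: "\<And>k. k0 \<le> k \<Longrightarrow> \<exists>v<k. 2 * (k - v) \<le> k \<and> (T ^^ v) x \<in> E"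
  shows "\<bar>f ((T ^^ k) x)\<bar> \<le> (\<Sum>i<k0. \<bar>f ((T ^^ i) x)\<bar>) + 2 * j * k"
proof (induction k rule: less_induct)
  case (less k)
  define D where "D = (\<Sum>i<k0. \<bar>f ((T ^^ i) x)\<bar>)"
  show ?case
  proof (cases "k < k0")
    case True
    then have "\<bar>f ((T ^^ k) x)\<bar> \<le> D" unfolding D_def by (intro member_le_sum) auto
    moreover have "0 \<le> 2 * j * k" using \<open>0 \<le> j\<close> by simp
    ultimately show ?thesis unfolding D_def by linarith
  next
    case False
    then obtain v where v: "v < k" "2 * (k - v) \<le> k" "(T ^^ v) x \<in> E" using visits[of k] by auto
    define n where "n = k - v"
    have n: "1 \<le> n" "n \<le> v" "v - n < k" "2 * (v - n) + n \<le> 2 * k"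
      using v(1,2) unfolding n_def by auto
    have "(T_inv ^^ n) ((T ^^ v) x) = (T ^^ (v - n)) x"
      using assms(1) n(2) by (simp add: funpow_T_inv_funpow_T)
    moreover have "(T ^^ n) ((T ^^ v) x) = (T ^^ k) x"
      using funpow_add[of n v T] v(1) by (simp add: n_def)
    ultimately have "\<bar>f ((T ^^ (v - n)) x) + f ((T ^^ k) x)\<bar> \<le> j * n"
      using bound[OF v(3) n(1)] by simp
    moreover have "\<bar>f ((T ^^ (v - n)) x)\<bar> \<le> D + 2 * j * (v - n)"
      using less.IH[OF n(3)] unfolding D_def .
    moreover have "j * (2 * real (v - n) + real n) \<le> j * (2 * real k)"
    proof -
      have "real (2 * (v - n) + n) \<le> real (2 * k)" using n(4) by (simp only: of_nat_le_iff)
      then show ?thesis using \<open>0 \<le> j\<close> by (intro mult_left_mono) simp_all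
    qed
    moreover have "\<bar>f ((T ^^ k) x)\<bar> \<le> \<bar>f ((T ^^ (v - n)) x) + f ((T ^^ k) x)\<bar> + \<bar>f ((T ^^ (v - n)) x)\<bar>"
      using abs_triangle_ineq4[of "f ((T ^^ (v - n)) x) + f ((T ^^ k) x)" "f ((T ^^ (v - n)) x)"] by simp
    ultimately show ?thesis unfolding D_def distrib_left by linarith
  qed
qed

lemma linear_growth_AE_if_symmetric_sums_bounded:
  fixes f :: "'a \<Rightarrow> real" and j :: real
  assumes "E \<in> sets M" and "0 < prob E" and "0 \<le> j"
    and bound: "\<And>y n. y \<in> E \<Longrightarrow> 1 \<le> n \<Longrightarrow> \<bar>f ((T_inv ^^ n) y) + f ((T ^^ n) y)\<bar> \<le> j * n"
  shows "AE x in M. \<exists>c. \<forall>k. \<bar>f ((T ^^ k) x)\<bar> \<le> c * (real k + 1)"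
proof -
  have "AE x in M. \<exists>k0. \<forall>k\<ge>k0. \<exists>v<k. 2 * (k - v) \<le> k \<and> (T ^^ v) x \<in> E"
    by (rule recent_visit_AE) (use assms in auto)
  then show ?thesis using AE_space
  proof eventually_elim
    case (elim x)
    then obtain k0 where visits: "\<And>k. k0 \<le> k \<Longrightarrow> \<exists>v<k. 2 * (k - v) \<le> k \<and> (T ^^ v) x \<in> E"
      by blast
    define D where "D = (\<Sum>i<k0. \<bar>f ((T ^^ i) x)\<bar>)"
    have "\<bar>f ((T ^^ k) x)\<bar> \<le> D + 2 * j * k" for k
      unfolding D_def using elim by (intro abs_funpow_le_linear_if_recent_visits[OF _ \<open>0 \<le> j\<close> bound visits]) auto
    moreover have "D + 2 * j * k \<le> max D (2 * j) * (real k + 1)" for k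
    proof -
      have "2 * j * k \<le> max D (2 * j) * k" by (intro mult_right_mono) simp_all
      then show ?thesis using max.cobounded1[of D "2 * j"] unfolding distrib_left by linarith
    qed
    ultimately show ?case by (blast intro: order.trans)
  qed
qed

lemma linear_growth_AE_if_limsup_finite:
  fixes f :: "'a \<Rightarrow> real"
  assumes [measurable]: "f \<in> borel_measurable M"
    and "\<exists>A\<in>sets M. measure M A > 0 \<and>
           (AE x in M. x \<in> A \<longrightarrow> limsup (\<lambda>n. ereal (\<bar>f ((T_inv ^^ n) x) + f ((T ^^ n) x)\<bar> / real n)) < \<infinity>)"
  shows "AE x in M. \<exists>c. \<forall>k. \<bar>f ((T ^^ k) x)\<bar> \<le> c * (real k + 1)"
proof -
  obtain A where A: "A \<in> sets M" "0 < prob A"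
    and limsup: "AE x in M. x \<in> A \<longrightarrow> limsup (\<lambda>n. ereal (\<bar>f ((T_inv ^^ n) x) + f ((T ^^ n) x)\<bar> / real n)) < \<infinity>"
    using assms(2) by blast
  have [measurable]: "(\<lambda>x. f ((T_inv ^^ n) x)) \<in> borel_measurable M" for n
    by (rule measurable_compose[OF measurable_compose_n[OF T_inv_measurable]]) simp
  define E where "E j = {x \<in> space M. \<forall>n\<ge>1. \<bar>f ((T_inv ^^ n) x) + f ((T ^^ n) x)\<bar> \<le> real j * n}"
    for j :: nat
  have E_sets: "E j \<in> sets M" for j unfolding E_def by measurable
  have "AE x in M. x \<in> A \<longrightarrow> (\<exists>j. x \<in> E j)"
    using limsup AE_space
  proof eventually_elim
    case (elim x)
    show ?case
    proof
      assume "x \<in> A"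
      then have "limsup (\<lambda>n. ereal (\<bar>f ((T_inv ^^ n) x) + f ((T ^^ n) x)\<bar> / real n)) < \<infinity>"
        using elim by blast
      from limsup_finite_then_bounded[OF this] obtain C
        where C: "\<And>n. \<bar>f ((T_inv ^^ n) x) + f ((T ^^ n) x)\<bar> / real n \<le> C"
        by blast
      have "\<bar>f ((T_inv ^^ n) x) + f ((T ^^ n) x)\<bar> \<le> real (nat \<lceil>C\<rceil>) * n" if "1 \<le> n" for n
      proof -
        have "\<bar>f ((T_inv ^^ n) x) + f ((T ^^ n) x)\<bar> \<le> C * n" using C[of n] that by (simp add: field_simps)
        also have "\<dots> \<le> real (nat \<lceil>C\<rceil>) * n" by (intro mult_right_mono) linarith+
        finally show ?thesis .
      qed
      then show "\<exists>j. x \<in> E j" using elim unfolding E_def by blast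
    qed
  qed
  then obtain j where "0 < prob (E j)"
    using prob_pos_member_if_AE_covered[of E, OF E_sets A] by blast
  then show ?thesis
    by (rule linear_growth_AE_if_symmetric_sums_bounded[OF E_sets, where j="real j"]) (auto simp: E_def)
qed

end

theorem proposition3:
  fixes M :: "'a measure" and T :: "'a \<Rightarrow> 'a" and f :: "'a \<Rightarrow> real"
  assumes "standing_system M T"
    and "f \<in> borel_measurable M"
    and "\<exists>A\<in>sets M. measure M A > 0 \<and>
           (AE x in M. x \<in> A \<longrightarrow>
              limsup (\<lambda>n. ereal (\<bar>f ((inv_into (space M) T ^^ n) x) + f ((T ^^ n) x)\<bar> / real n))
                < \<infinity>)"
  shows "AE x in M. (\<lambda>n. f ((T ^^ n) x) / real n) \<longlonglongrightarrow> 0"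
proof -
  interpret invertible_ergodic_system M T
    using assms(1) unfolding standing_system_def
    by (intro invertible_ergodic_system.intro ergodic_system.intro mp_system.intro
        invertible_ergodic_system_axioms.intro ergodic_system_axioms.intro mp_system_axioms.intro) blast+
  show ?thesis
    by (intro tendsto_zero_AE_if_linear_growth linear_growth_AE_if_limsup_finite assms(2,3))
qed

end
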